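(* There is a constant $C$ such that for every regular unary language $L\subseteq\{a\}^*$, $\mathrm{nsyn}(L)\le C\cdot\mathrm{ns}(L)^2$.
   Context: $\mathrm{ns}(L)$ is the least number of states of an nfa (several initial states allowed) accepting $L$. $\mathrm{nsyn}(L)$ (nondeterministic syntactic complexity) is the least number of states of a subatomic nfa accepting $L$, i.e. an nfa every state of which accepts a language in the boolean subalgebra of $\mathcal{P}(\Sigma^* )$ generated by the two-sided derivatives $u^{-1}Lv^{-1}=\{w:uwv\in L\}$; equivalently, the least degree $|J(S)|$ of a boolean representation $\mathrm{Syn}(L)\to\mathbf{JSL}(S,S)$ extending the canonical representation $[w]_L\mapsto(K\mapsto w^{-1}K)$ on the semilattice of finite unions of left derivatives of $L$. *)

theory Defs
  imports Main
begin

type_synonym 'a nfa = "nat set \<times> nat set \<times> nat set \<times> (nat \<Rightarrow> 'a \<Rightarrow> nat set)"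

definition wf_nfa :: "'a nfa \<Rightarrow> bool" where
  "wf_nfa A = (case A of (Q, I, F, d) \<Rightarrow>
     finite Q \<and> I \<subseteq> Q \<and> F \<subseteq> Q \<and> (\<forall>q\<in>Q. \<forall>x. d q x \<subseteq> Q))"

fun reach :: "(nat \<Rightarrow> 'a \<Rightarrow> nat set) \<Rightarrow> nat set \<Rightarrow> 'a list \<Rightarrow> nat set" where
  "reach d S [] = S"
| "reach d S (x # w) = reach d (\<Union>q\<in>S. d q x) w"

definition lang_from :: "'a nfa \<Rightarrow> nat set \<Rightarrow> 'a list set" where
  "lang_from A S = (case A of (Q, I, F, d) \<Rightarrow> {w. reach d S w \<inter> F \<noteq> {}})"

definition nfa_lang :: "'a nfa \<Rightarrow> 'a list set" where
  "nfa_lang A = lang_from A (fst (snd A))"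

definition nfa_states :: "'a nfa \<Rightarrow> nat set" where
  "nfa_states A = fst A"

definition regular :: "'a list set \<Rightarrow> bool" where
  "regular L = (\<exists>A. wf_nfa A \<and> nfa_lang A = L)"

definition ns :: "'a list set \<Rightarrow> nat" where
  "ns L = (LEAST n. \<exists>A. wf_nfa A \<and> nfa_lang A = L \<and> card (nfa_states A) = n)"

definition two_sided_deriv :: "'a list \<Rightarrow> 'a list set \<Rightarrow> 'a list \<Rightarrow> 'a list set" where
  "two_sided_deriv u L v = {w. u @ w @ v \<in> L}"

inductive_set bool_alg_gen :: "'b set set \<Rightarrow> 'b set set" for G where
  gen: "X \<in> G \<Longrightarrow> X \<in> bool_alg_gen G"
| empty: "{} \<in> bool_alg_gen G"
| compl: "X \<in> bool_alg_gen G \<Longrightarrow> - X \<in> bool_alg_gen G"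
| union: "X \<in> bool_alg_gen G \<Longrightarrow> Y \<in> bool_alg_gen G \<Longrightarrow> X \<union> Y \<in> bool_alg_gen G"

definition two_sided_derivs :: "'a list set \<Rightarrow> 'a list set set" where
  "two_sided_derivs L = {two_sided_deriv u L v | u v. True}"

definition subatomic :: "'a list set \<Rightarrow> 'a nfa \<Rightarrow> bool" where
  "subatomic L A = (\<forall>q\<in>nfa_states A. lang_from A {q} \<in> bool_alg_gen (two_sided_derivs L))"

definition nsyn :: "'a list set \<Rightarrow> nat" where
  "nsyn L = (LEAST n. \<exists>A. wf_nfa A \<and> nfa_lang A = L \<and> subatomic L A
                          \<and> card (nfa_states A) = n)"

end

theory Submission
  imports Defs
begin

(* Let L be accepted by an nfa with n states. Cutting loops out of accepting paths
   (Chrobak) shows that a length k >= 2n^2 + 1 is accepted iff, for some state q lying on a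
   cycle, k is congruent modulo the least period p_q <= n of q to the length of a short
   accepting path through q. Hence L is accepted by an nfa consisting of a tail of
   2n^2 + 1 states followed by one cycle of length p_q per such q, with at most 4n^2 states.
   Tail states accept left derivatives of L. The final states on the cycles are chosen by
   saturating those periodic sets under the Myhill-Nerode equivalence; as L has finitely
   many derivatives, every cycle state then accepts a finite union of atoms of the boolean
   algebra they generate, so the automaton is subatomic. *)

lemma bool_alg_gen_Int:
  assumes "X \<in> bool_alg_gen G" "Y \<in> bool_alg_gen G"
  shows "X \<inter> Y \<in> bool_alg_gen G"
proof -
  have "- (- X \<union> - Y) \<in> bool_alg_gen G"
    by (intro bool_alg_gen.compl bool_alg_gen.union assms)
  then show ?thesis by simp
qed

lemma bool_alg_gen_UNIV: "UNIV \<in> bool_alg_gen G"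
  using bool_alg_gen.compl[OF bool_alg_gen.empty, of G] by simp

lemma bool_alg_gen_Inter:
  "finite S \<Longrightarrow> S \<subseteq> bool_alg_gen G \<Longrightarrow> \<Inter> S \<in> bool_alg_gen G"
  by (induction S rule: finite_induct) (auto intro: bool_alg_gen_Int bool_alg_gen_UNIV)

lemma bool_alg_gen_Union:
  "finite S \<Longrightarrow> S \<subseteq> bool_alg_gen G \<Longrightarrow> \<Union> S \<in> bool_alg_gen G"
  by (induction S rule: finite_induct) (auto intro: bool_alg_gen.union bool_alg_gen.empty)

text \<open>X is the finite union of the atoms of H that it meets.\<close>
lemma bool_alg_gen_if_saturated:
  assumes "finite H" "H \<subseteq> bool_alg_gen G"
    and saturated: "\<And>a b. \<forall>D\<in>H. a \<in> D \<longleftrightarrow> b \<in> D \<Longrightarrow> a \<in> X \<Longrightarrow> b \<in> X"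
  shows "X \<in> bool_alg_gen G"
proof -
  define atom where "atom T = \<Inter> ((\<lambda>D. if D \<in> T then D else - D) ` H)" for T
  have atom_in: "atom T \<in> bool_alg_gen G" for T
    unfolding atom_def
    by (rule bool_alg_gen_Inter) (use assms(1,2) in \<open>auto intro: bool_alg_gen.compl\<close>)
  have "X = \<Union> ((\<lambda>a. atom {D\<in>H. a \<in> D}) ` X)"
    using saturated by (auto simp: atom_def)
  moreover have "finite ((\<lambda>a. atom {D\<in>H. a \<in> D}) ` X)"
    by (rule finite_subset[of _ "atom ` Pow H"]) (use assms(1) in auto)
  ultimately show ?thesis
    by (metis (no_types, lifting) atom_in bool_alg_gen_Union image_subset_iff)
qed

lemma reach_append: "reach d S (u @ v) = reach d (reach d S u) v"
  by (induction u arbitrary: S) simp_all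

lemma reach_UN_singletons: "reach d S w = (\<Union>s\<in>S. reach d {s} w)"
proof (induction w arbitrary: S)
  case (Cons x w)
  have "reach d S (x # w) = (\<Union>s\<in>(\<Union>q\<in>S. d q x). reach d {s} w)"
    by (simp only: reach.simps Cons.IH[of "\<Union>q\<in>S. d q x"])
  also have "\<dots> = (\<Union>q\<in>S. \<Union>s\<in>d q x. reach d {s} w)" by blast
  also have "\<dots> = (\<Union>q\<in>S. reach d {q} (x # w))" by (simp only: reach.simps Cons.IH[symmetric]) simp
  finally show ?case .
qed simp

definition walk :: "(nat \<Rightarrow> unit \<Rightarrow> nat set) \<Rightarrow> (nat \<Rightarrow> nat) \<Rightarrow> nat \<Rightarrow> bool" where
  "walk d g l \<longleftrightarrow> (\<forall>i<l. g (Suc i) \<in> d (g i) ())"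

definition path :: "(nat \<Rightarrow> unit \<Rightarrow> nat set) \<Rightarrow> nat \<Rightarrow> nat \<Rightarrow> nat \<Rightarrow> bool" where
  "path d l s t \<longleftrightarrow> (\<exists>g. g 0 = s \<and> g l = t \<and> walk d g l)"

lemma path_0 [simp]: "path d 0 s t \<longleftrightarrow> s = t"
  unfolding path_def walk_def by (auto intro: exI[of _ "\<lambda>_. s"])

lemma path_Suc: "path d (Suc l) s t \<longleftrightarrow> (\<exists>q. path d l s q \<and> t \<in> d q ())"
proof
  assume "path d (Suc l) s t"
  then obtain g where "g 0 = s" "g (Suc l) = t" "walk d g (Suc l)"
    by (auto simp: path_def)
  then show "\<exists>q. path d l s q \<and> t \<in> d q ()"
    unfolding path_def walk_def by (intro exI[of _ "g l"]) auto
next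
  assume "\<exists>q. path d l s q \<and> t \<in> d q ()"
  then obtain g where "g 0 = s" "walk d g l" "t \<in> d (g l) ()"
    by (auto simp: path_def)
  then show "path d (Suc l) s t"
    unfolding path_def walk_def by (intro exI[of _ "g(Suc l := t)"]) (auto simp: less_Suc_eq)
qed

lemma reach_iff_path:
  fixes w :: "unit list"
  shows "t \<in> reach d S w \<longleftrightarrow> (\<exists>s\<in>S. path d (length w) s t)"
proof (induction w arbitrary: t rule: rev_induct)
  case (snoc x w)
  have "t \<in> reach d S (w @ [x]) \<longleftrightarrow> (\<exists>q\<in>reach d S w. t \<in> d q ())"
    by (cases x) (simp add: reach_append)
  also have "\<dots> \<longleftrightarrow> (\<exists>s\<in>S. \<exists>q. path d (length w) s q \<and> t \<in> d q ())"
    using snoc.IH by blast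
  also have "\<dots> \<longleftrightarrow> (\<exists>s\<in>S. path d (length (w @ [x])) s t)"
    by (simp add: path_Suc)
  finally show ?case .
qed simp

lemma path_append: "path d a s t \<Longrightarrow> path d b t u \<Longrightarrow> path d (a + b) s u"
  by (induction b arbitrary: u) (auto simp: path_Suc)

lemma path_loop_pow: "path d p q q \<Longrightarrow> path d (m * p) q q"
  by (induction m) (auto intro: path_append)

lemma path_subwalk:
  assumes "walk d g l" "a \<le> b" "b \<le> l"
  shows "path d (b - a) (g a) (g b)"
  unfolding path_def using assms by (intro exI[of _ "\<lambda>x. g (x + a)"]) (auto simp: walk_def)

lemma path_remove_loop:
  assumes "walk d g l" "i < j" "j \<le> l" "g i = g j"
  shows "path d (l - (j - i)) (g 0) (g l)"
proof -
  have "path d i (g 0) (g j)" using path_subwalk[OF assms(1), of 0 i] assms by simp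
  moreover have "path d (l - j) (g j) (g l)" using path_subwalk[OF assms(1), of j l] assms by simp
  ultimately have "path d (i + (l - j)) (g 0) (g l)" by (rule path_append)
  moreover have "i + (l - j) = l - (j - i)" using assms(2,3) by simp
  ultimately show ?thesis by simp
qed

lemma repetition_in_range:
  assumes "f ` {0..m} \<subseteq> A" "finite A" "card A \<le> m"
  obtains i j where "i < j" "j \<le> m" "f i = f j"
proof -
  have "\<not> inj_on f {0..m}"
  proof
    assume "inj_on f {0..m}"
    then have "card {0..m} \<le> card A" using card_inj_on_le assms(1,2) by blast
    then show False using assms(3) by simp
  qed
  then obtain x y where "x \<le> m" "y \<le> m" "x \<noteq> y" "f x = f y"
    by (auto simp: inj_on_def)
  then show ?thesis using that by (metis nat_neq_iff)
qed

lemma nsyn_le_card: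
  assumes "wf_nfa A" "nfa_lang A = L" "subatomic L A"
  shows "nsyn L \<le> card (nfa_states A)"
  unfolding nsyn_def using assms by (intro Least_le) blast

lemma nsyn_empty: "nsyn {} = 0"
  using nsyn_le_card[of "({}, {}, {}, \<lambda>_ _. {})" "{}"]
  by (simp add: wf_nfa_def nfa_lang_def lang_from_def subatomic_def nfa_states_def)

lemma ns_attained:
  assumes "regular L"
  obtains A where "wf_nfa A" "nfa_lang A = L" "card (nfa_states A) = ns L"
proof -
  have "\<exists>n A. wf_nfa A \<and> nfa_lang A = L \<and> card (nfa_states A) = n"
    using assms unfolding regular_def by blast
  from LeastI_ex[OF this] show ?thesis using that unfolding ns_def by blast
qed

locale unary_nfa =
  fixes Q I F :: "nat set" and d :: "nat \<Rightarrow> unit \<Rightarrow> nat set"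
  assumes finite_Q: "finite Q" and I_subset_Q: "I \<subseteq> Q"
    and d_subset_Q: "\<And>q. q \<in> Q \<Longrightarrow> d q () \<subseteq> Q"
begin

definition acc :: "nat set" where
  "acc = {k. \<exists>i\<in>I. \<exists>f\<in>F. path d k i f}"

lemma lang_from_initial: "lang_from (Q, I, F, d) I = {w. length w \<in> acc}"
  unfolding lang_from_def acc_def using reach_iff_path[of _ d I] by blast

lemma walk_in_Q:
  assumes "walk d g l" "g 0 \<in> Q"
  shows "x \<le> l \<Longrightarrow> g x \<in> Q"
proof (induction x)
  case (Suc x)
  then show ?case
    using assms(1) d_subset_Q unfolding walk_def by (meson Suc_le_lessD less_imp_le subsetD)
qed (use assms(2) in simp)

definition cyclic :: "nat set" where
  "cyclic = {q\<in>Q. \<exists>l. 0 < l \<and> l \<le> card Q \<and> path d l q q}"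

definition period :: "nat \<Rightarrow> nat" where
  "period q = (LEAST l. 0 < l \<and> path d l q q)"

definition big_period :: nat where
  "big_period = fact (card Q)"

definition threshold :: nat where
  "threshold = 2 * card Q * card Q + 1"

definition through :: "nat \<Rightarrow> nat set" where
  "through q = {k. \<exists>l1 l2. l1 + l2 < threshold \<and> (l1 + l2) mod period q = k mod period q
     \<and> (\<exists>i\<in>I. path d l1 i q) \<and> (\<exists>f\<in>F. path d l2 q f)}"

lemma
  assumes "q \<in> cyclic"
  shows period_pos: "0 < period q" and period_le_card: "period q \<le> card Q"
    and path_period: "path d (period q) q q"
proof -
  obtain l where l: "0 < l" "l \<le> card Q" "path d l q q"
    using assms unfolding cyclic_def by blast
  have "0 < period q \<and> path d (period q) q q"
    unfolding period_def by (rule LeastI[of _ l]) (use l in auto)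
  then show "0 < period q" "path d (period q) q q" by auto
  have "period q \<le> l" unfolding period_def by (rule Least_le) (use l in auto)
  then show "period q \<le> card Q" using l by simp
qed

lemma period_dvd_big_period: "q \<in> cyclic \<Longrightarrow> period q dvd big_period"
  unfolding big_period_def using period_pos period_le_card
  by (intro dvd_fact) (auto simp: Suc_le_eq)

lemma big_period_pos: "0 < big_period"
  unfolding big_period_def by simp

text \<open>Pigeonhole on pairs (state, position mod p) finds a loop of length divisible by p
  to cut out.\<close>
lemma short_path_same_residue:
  assumes "s \<in> Q" "path d l s t" "0 < p"
  shows "\<exists>l'. l' mod p = l mod p \<and> l' < p * card Q \<and> path d l' s t"
  using assms(2)
proof (induction l rule: less_induct)
  case (less l)
  show ?case
  proof (cases "l < p * card Q")
    case False
    obtain g where g: "g 0 = s" "g l = t" "walk d g l"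
      using less.prems path_def by blast
    have "(\<lambda>x. (g x, x mod p)) ` {0..p * card Q} \<subseteq> Q \<times> {..<p}"
      using walk_in_Q[OF g(3)] g(1) assms(1,3) False by auto
    then obtain i j where ij: "i < j" "j \<le> p * card Q" "(g i, i mod p) = (g j, j mod p)"
      by (rule repetition_in_range) (use finite_Q in \<open>auto simp: card_cartesian_product\<close>)
    have "path d (l - (j - i)) s t"
      using path_remove_loop[OF g(3) ij(1)] ij(2,3) False g(1,2) by simp
    moreover have "l - (j - i) < l" using ij(1,2) False by simp
    ultimately obtain l' where l': "l' mod p = (l - (j - i)) mod p" "l' < p * card Q" "path d l' s t"
      using less.IH by blast
    have "p dvd j - i" using ij(1,3) mod_eq_dvd_iff_nat[of i j p] by simp
    then have "(l - (j - i)) mod p = l mod p"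
      using ij(1,2) False mod_eq_dvd_iff_nat[of "l - (j - i)" l p] by simp
    then show ?thesis using l' by auto
  qed (use less.prems in blast)
qed

lemma acc_imp_through:
  assumes "threshold \<le> k" "k \<in> acc"
  shows "\<exists>q\<in>cyclic. k \<in> through q"
proof -
  obtain i f where acc_path: "i \<in> I" "f \<in> F" "path d k i f"
    using assms(2) unfolding acc_def by blast
  then obtain g where g: "g 0 = i" "g k = f" "walk d g k"
    by (auto simp: path_def)
  have "card Q \<le> card Q * card Q" by (cases "card Q") auto
  then have card_le_k: "card Q \<le> k" using assms(1) unfolding threshold_def by linarith
  have i_Q: "i \<in> Q" using acc_path(1) I_subset_Q by auto
  have "g ` {0..card Q} \<subseteq> Q"
    using walk_in_Q[OF g(3)] g(1) i_Q card_le_k by auto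
  then obtain a b where ab: "a < b" "b \<le> card Q" "g a = g b"
    by (rule repetition_in_range) (use finite_Q in auto)
  define q where "q = g a"
  have q_Q: "q \<in> Q" unfolding q_def using walk_in_Q[OF g(3)] g(1) i_Q ab card_le_k by simp
  have "path d (b - a) q q" using path_subwalk[OF g(3), of a b] ab card_le_k unfolding q_def by simp
  then have q: "q \<in> cyclic"
    unfolding cyclic_def using q_Q ab by (intro CollectI conjI exI[of _ "b - a"]) auto
  have "path d a i q" using path_subwalk[OF g(3), of 0 a] ab card_le_k g(1) unfolding q_def by simp
  then obtain l1 where l1: "l1 mod period q = a mod period q" "l1 < period q * card Q"
      "path d l1 i q"
    using short_path_same_residue[OF i_Q _ period_pos[OF q]] by blast
  have "path d (k - a) q f" using path_subwalk[OF g(3), of a k] ab card_le_k g(2) unfolding q_def by simp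
  then obtain l2 where l2: "l2 mod period q = (k - a) mod period q" "l2 < period q * card Q"
      "path d l2 q f"
    using short_path_same_residue[OF q_Q _ period_pos[OF q]] by blast
  have "period q * card Q \<le> card Q * card Q" using period_le_card[OF q] by simp
  then have "l1 + l2 < threshold" using l1(2) l2(2) unfolding threshold_def by linarith
  moreover have "(l1 + l2) mod period q = (a + (k - a)) mod period q"
    using l1(1) l2(1) by (metis mod_add_eq)
  then have "(l1 + l2) mod period q = k mod period q" using ab card_le_k by simp
  ultimately show ?thesis unfolding through_def using q l1(3) l2(3) acc_path(1,2) by blast
qed

lemma through_imp_acc:
  assumes q: "q \<in> cyclic" and k: "threshold \<le> k" "k \<in> through q"
  shows "k \<in> acc"
proof -
  obtain l1 l2 i f where l: "l1 + l2 < threshold" "(l1 + l2) mod period q = k mod period q"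
      "i \<in> I" "path d l1 i q" "f \<in> F" "path d l2 q f"
    using k(2) unfolding through_def by blast
  obtain m where m: "k - (l1 + l2) = period q * m"
    using l(1,2) k(1) mod_eq_dvd_iff_nat[of "l1 + l2" k "period q"] by (auto simp: dvd_def)
  have "path d (l1 + m * period q + l2) i f"
    using path_loop_pow[OF path_period[OF q]] l(4,6) by (blast intro: path_append)
  moreover have "l1 + m * period q + l2 = k" using m l(1) k(1) by (simp add: algebra_simps)
  ultimately show ?thesis unfolding acc_def using l(3,5) by auto
qed

lemma through_add_period_mult [simp]: "x + period q * c \<in> through q \<longleftrightarrow> x \<in> through q"
  unfolding through_def by simp

lemma through_add_big_period_mult:
  assumes "q \<in> cyclic"
  shows "x + big_period * c \<in> through q \<longleftrightarrow> x \<in> through q"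
proof -
  obtain e where "big_period = period q * e"
    using period_dvd_big_period[OF assms] by (rule dvdE)
  then show ?thesis using through_add_period_mult[of x q "e * c"] by (simp add: mult.assoc)
qed

lemma acc_iff_through:
  "threshold \<le> k \<Longrightarrow> k \<in> acc \<longleftrightarrow> (\<exists>q\<in>cyclic. k \<in> through q)"
  using acc_imp_through through_imp_acc by blast

lemma acc_add_big_period_mult:
  assumes "threshold \<le> k"
  shows "k + big_period * m \<in> acc \<longleftrightarrow> k \<in> acc"
proof -
  have "k + big_period * m \<in> acc \<longleftrightarrow> (\<exists>q\<in>cyclic. k + big_period * m \<in> through q)"
    using acc_iff_through assms by simp
  also have "\<dots> \<longleftrightarrow> (\<exists>q\<in>cyclic. k \<in> through q)"
    using through_add_big_period_mult by blast
  finally show ?thesis using acc_iff_through assms by simp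
qed

definition future :: "nat \<Rightarrow> nat set" where
  "future x = {j. x + j \<in> acc}"

lemma mem_future_swap: "x \<in> future y \<longleftrightarrow> y \<in> future x"
  by (simp add: future_def add.commute)

lemma future_add:
  assumes "future x = future y"
  shows "future (x + c) = future (y + c)"
proof -
  have "j \<in> future (z + c) \<longleftrightarrow> c + j \<in> future z" for z j
    by (simp add: future_def add.assoc)
  then show ?thesis using assms by blast
qed

lemma future_add_big_period_mult:
  assumes "threshold \<le> x"
  shows "future (x + big_period * m) = future x"
proof -
  have "x + big_period * m + j \<in> acc \<longleftrightarrow> x + j \<in> acc" for j
    using acc_add_big_period_mult[of "x + j" m] assms by (simp add: ac_simps)
  then show ?thesis unfolding future_def by blast
qed

lemma finite_range_future: "finite (range future)"
proof -
  have "future x \<in> future ` {..<threshold + big_period}" for x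
  proof (cases "x < threshold")
    case False
    define r where "r = (x - threshold) mod big_period"
    have "x = (threshold + r) + big_period * ((x - threshold) div big_period)"
      using False unfolding r_def by simp
    then have "future x = future ((threshold + r) + big_period * ((x - threshold) div big_period))"
      by (rule arg_cong)
    also have "\<dots> = future (threshold + r)"
      by (rule future_add_big_period_mult) simp
    finally have "future x = future (threshold + r)" .
    moreover have "threshold + r < threshold + big_period"
      unfolding r_def using big_period_pos by simp
    ultimately show ?thesis by (intro rev_image_eqI[of "threshold + r"]) simp_all
  qed simp
  then have "range future \<subseteq> future ` {..<threshold + big_period}" by blast
  then show ?thesis by (rule finite_subset) simp
qed

lemma threshold_le_shift: "threshold \<le> x + threshold * big_period"
proof -
  have "threshold \<le> threshold * big_period"
    using big_period_pos by (simp add: Suc_le_eq)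
  then show ?thesis by linarith
qed

text \<open>The periodic set through q is in general not saturated by the Myhill-Nerode relation
  (equality of futures); cycle_acc q is its saturation. The shift by threshold * big_period
  moves every argument beyond the threshold, where future is big_period-periodic.\<close>
definition cycle_acc :: "nat \<Rightarrow> nat set" where
  "cycle_acc q = {k. \<exists>k'\<ge>threshold. k' \<in> through q
     \<and> future (k + threshold * big_period) = future k'}"

lemma cycle_acc_future_cong: "future x = future y \<Longrightarrow> x \<in> cycle_acc q \<longleftrightarrow> y \<in> cycle_acc q"
  unfolding cycle_acc_def using future_add[of x y "threshold * big_period"] by simp

lemma cycle_acc_add_period:
  assumes q: "q \<in> cyclic"
  shows "x + period q \<in> cycle_acc q \<longleftrightarrow> x \<in> cycle_acc q"
proof
  assume "x \<in> cycle_acc q"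
  then obtain k' where k': "threshold \<le> k'" "k' \<in> through q"
      "future (x + threshold * big_period) = future k'"
    unfolding cycle_acc_def by blast
  have "future (x + period q + threshold * big_period) = future (k' + period q)"
    using future_add[OF k'(3), of "period q"] by (simp add: algebra_simps)
  moreover have "k' + period q \<in> through q" using through_add_period_mult[of k' q 1] k'(2) by simp
  ultimately show "x + period q \<in> cycle_acc q"
    unfolding cycle_acc_def using k'(1) by (intro CollectI exI[of _ "k' + period q"]) auto
next
  assume "x + period q \<in> cycle_acc q"
  then obtain k' where k': "threshold \<le> k'" "k' \<in> through q"
      "future (x + period q + threshold * big_period) = future k'"
    unfolding cycle_acc_def by blast
  obtain e where e: "big_period = period q * e"
    using period_dvd_big_period[OF q] by (rule dvdE)
  define c where "c = big_period - period q"
  have "period q \<le> big_period"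
    using period_dvd_big_period[OF q] big_period_pos by (simp add: dvd_imp_le)
  have "future (x + threshold * big_period)
      = future (x + threshold * big_period + big_period * 1)"
    by (rule future_add_big_period_mult[OF threshold_le_shift, symmetric])
  also have "x + threshold * big_period + big_period * 1 = x + period q + threshold * big_period + c"
    unfolding c_def using \<open>period q \<le> big_period\<close> by simp
  also have "future \<dots> = future (k' + c)"
    by (rule future_add[OF k'(3)])
  finally have "future (x + threshold * big_period) = future (k' + c)" .
  moreover have "k' + c \<in> through q"
    using through_add_period_mult[of k' q "e - 1"] k'(2)
    unfolding c_def e by (simp add: right_diff_distrib')
  ultimately show "x \<in> cycle_acc q"
    unfolding cycle_acc_def using k'(1) by (intro CollectI exI[of _ "k' + c"]) auto
qed

lemma cycle_acc_mod:
  assumes "q \<in> cyclic"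
  shows "x \<in> cycle_acc q \<longleftrightarrow> x mod period q \<in> cycle_acc q"
proof -
  have "y + m * period q \<in> cycle_acc q \<longleftrightarrow> y \<in> cycle_acc q" for y m
  proof (induction m)
    case (Suc m)
    have "y + Suc m * period q = (y + m * period q) + period q" by simp
    then show ?case using cycle_acc_add_period[OF assms] Suc.IH by metis
  qed simp
  from this[of "x mod period q" "x div period q"] show ?thesis by (simp only: mod_div_mult_eq)
qed

lemma acc_iff_cycle_acc:
  assumes "threshold \<le> k"
  shows "k \<in> acc \<longleftrightarrow> (\<exists>q\<in>cyclic. k \<in> cycle_acc q)"
proof
  assume "k \<in> acc"
  then obtain q where q: "q \<in> cyclic" "k \<in> through q" using acc_imp_through assms by blast
  then have "k + threshold * big_period \<in> through q"
    using through_add_big_period_mult[of q k threshold] by (simp add: mult.commute)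
  then have "k \<in> cycle_acc q"
    unfolding cycle_acc_def using assms
    by (intro CollectI exI[of _ "k + threshold * big_period"]) (simp add: threshold_le_shift)
  then show "\<exists>q\<in>cyclic. k \<in> cycle_acc q" using q(1) by blast
next
  assume "\<exists>q\<in>cyclic. k \<in> cycle_acc q"
  then obtain q k' where q: "q \<in> cyclic" "threshold \<le> k'" "k' \<in> through q"
      "future (k + threshold * big_period) = future k'"
    unfolding cycle_acc_def by blast
  then have "0 \<in> future (k + threshold * big_period)"
    using through_imp_acc by (simp add: future_def)
  then show "k \<in> acc"
    using acc_add_big_period_mult[OF assms, of threshold] by (simp add: future_def mult.commute)
qed

text \<open>Chrobak normal form: the tail 0, ..., threshold - 1 branches into one cycle of length
  period q per cyclic state q, whose states are cyc_state q r for r < period q.\<close>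
definition cyc_state :: "nat \<Rightarrow> nat \<Rightarrow> nat" where
  "cyc_state q r = threshold + q * Suc (card Q) + r"

definition chrobak_states :: "nat set" where
  "chrobak_states = {..<threshold} \<union> (\<lambda>(q, r). cyc_state q r) ` (SIGMA q:cyclic. {..<period q})"

definition chrobak_final :: "nat set" where
  "chrobak_final = {i. i < threshold \<and> i \<in> acc}
     \<union> (\<lambda>(q, r). cyc_state q r) ` (SIGMA q:cyclic. {r. r < period q \<and> r \<in> cycle_acc q})"

definition chrobak_trans :: "nat \<Rightarrow> unit \<Rightarrow> nat set" where
  "chrobak_trans s u =
    (if Suc s < threshold then {Suc s}
     else if Suc s = threshold then (\<lambda>q. cyc_state q (threshold mod period q)) ` cyclic
     else let q = (s - threshold) div Suc (card Q); r = (s - threshold) mod Suc (card Q)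
          in {cyc_state q (Suc r mod period q)})"

definition chrobak_nfa :: "unit nfa" where
  "chrobak_nfa = (chrobak_states, {0}, chrobak_final, chrobak_trans)"

lemma period_less_Suc_card: "q \<in> cyclic \<Longrightarrow> period q < Suc (card Q)"
  using period_le_card by (simp add: le_imp_less_Suc)

lemma threshold_le_cyc_state: "threshold \<le> cyc_state q r"
  unfolding cyc_state_def by simp

lemma cyc_state_decode:
  assumes "r < Suc (card Q)"
  shows "(cyc_state q r - threshold) div Suc (card Q) = q"
    and "(cyc_state q r - threshold) mod Suc (card Q) = r"
proof -
  have "cyc_state q r - threshold = r + Suc (card Q) * q" unfolding cyc_state_def by simp
  then show "(cyc_state q r - threshold) div Suc (card Q) = q"
    and "(cyc_state q r - threshold) mod Suc (card Q) = r"
    using assms by (simp_all del: mult_Suc)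
qed

lemma cyc_state_inj:
  assumes "r < Suc (card Q)" "r' < Suc (card Q)" "cyc_state q r = cyc_state q' r'"
  shows "q = q' \<and> r = r'"
  using cyc_state_decode[OF assms(1)] cyc_state_decode[OF assms(2)] assms(3) by metis

lemma chrobak_trans_cyc_state:
  assumes "q \<in> cyclic" "r < period q"
  shows "chrobak_trans (cyc_state q r) u = {cyc_state q (Suc r mod period q)}"
proof -
  have r: "r < Suc (card Q)" using assms period_less_Suc_card by fastforce
  have "\<not> Suc (cyc_state q r) < threshold" "Suc (cyc_state q r) \<noteq> threshold"
    using threshold_le_cyc_state[of q r] by auto
  then show ?thesis unfolding chrobak_trans_def using cyc_state_decode[OF r] by simp
qed

lemma reach_cyc_state:
  assumes q: "q \<in> cyclic"
  shows "r < period q \<Longrightarrow> reach chrobak_trans {cyc_state q r} w = {cyc_state q ((r + length w) mod period q)}"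
proof (induction w arbitrary: r)
  case (Cons x w)
  have "reach chrobak_trans {cyc_state q r} (x # w)
      = reach chrobak_trans {cyc_state q (Suc r mod period q)} w"
    using chrobak_trans_cyc_state[OF q Cons.prems] by simp
  also have "\<dots> = {cyc_state q ((Suc r mod period q + length w) mod period q)}"
    using Cons.IH period_pos[OF q] by simp
  finally show ?case by (simp add: mod_add_left_eq)
qed simp

lemma reach_tail:
  "i < threshold \<Longrightarrow> reach chrobak_trans {i} w =
    (if i + length w < threshold then {i + length w}
     else (\<lambda>q. cyc_state q ((i + length w) mod period q)) ` cyclic)"
proof (induction w arbitrary: i)
  case (Cons x w)
  show ?case
  proof (cases "Suc i < threshold")
    case True
    then have "reach chrobak_trans {i} (x # w) = reach chrobak_trans {Suc i} w"
      by (simp add: chrobak_trans_def)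
    then show ?thesis using Cons.IH[OF True] by simp
  next
    case False
    then have i: "Suc i = threshold" using Cons.prems by simp
    then have "reach chrobak_trans {i} (x # w)
        = reach chrobak_trans ((\<lambda>q. cyc_state q (threshold mod period q)) ` cyclic) w"
      by (simp add: chrobak_trans_def)
    also have "\<dots> = (\<Union>q\<in>cyclic. reach chrobak_trans {cyc_state q (threshold mod period q)} w)"
      by (subst reach_UN_singletons) simp
    also have "\<dots> = (\<Union>q\<in>cyclic. {cyc_state q ((threshold + length w) mod period q)})"
      using reach_cyc_state period_pos by (intro SUP_cong) (auto simp: mod_add_left_eq)
    also have "threshold + length w = i + length (x # w)" using i by simp
    finally show ?thesis using i by auto
  qed
qed simp

lemma cyc_state_final_iff:
  assumes "q \<in> cyclic" "r < period q"
  shows "cyc_state q r \<in> chrobak_final \<longleftrightarrow> r \<in> cycle_acc q"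
proof
  assume "cyc_state q r \<in> chrobak_final"
  then obtain q' r' where "q' \<in> cyclic" "r' < period q'" "r' \<in> cycle_acc q'"
      "cyc_state q r = cyc_state q' r'"
    unfolding chrobak_final_def using threshold_le_cyc_state[of q r] by auto
  then show "r \<in> cycle_acc q"
    using cyc_state_inj[of r r' q q'] period_less_Suc_card assms by fastforce
qed (use assms in \<open>auto simp: chrobak_final_def\<close>)

lemma tail_final_iff: "i < threshold \<Longrightarrow> i \<in> chrobak_final \<longleftrightarrow> i \<in> acc"
  unfolding chrobak_final_def using threshold_le_cyc_state by (auto simp: not_le[symmetric])

lemma lang_from_tail:
  assumes i: "i < threshold"
  shows "lang_from chrobak_nfa {i} = {w. i + length w \<in> acc}"
proof -
  have "reach chrobak_trans {i} w \<inter> chrobak_final \<noteq> {} \<longleftrightarrow> i + length w \<in> acc" for w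
  proof (cases "i + length w < threshold")
    case True
    then show ?thesis using reach_tail[OF i, of w] tail_final_iff by simp
  next
    case False
    have "reach chrobak_trans {i} w \<inter> chrobak_final \<noteq> {}
        \<longleftrightarrow> (\<exists>q\<in>cyclic. (i + length w) mod period q \<in> cycle_acc q)"
      using reach_tail[OF i, of w] False cyc_state_final_iff period_pos by auto
    also have "\<dots> \<longleftrightarrow> (\<exists>q\<in>cyclic. i + length w \<in> cycle_acc q)"
      using cycle_acc_mod by blast
    also have "\<dots> \<longleftrightarrow> i + length w \<in> acc"
      using acc_iff_cycle_acc False by simp
    finally show ?thesis .
  qed
  then show ?thesis unfolding chrobak_nfa_def lang_from_def by simp
qed

lemma lang_from_cyc_state:
  assumes "q \<in> cyclic" "r < period q"
  shows "lang_from chrobak_nfa {cyc_state q r} = {w. r + length w \<in> cycle_acc q}"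
proof -
  have "reach chrobak_trans {cyc_state q r} w \<inter> chrobak_final \<noteq> {} \<longleftrightarrow> r + length w \<in> cycle_acc q"
    for w
    using reach_cyc_state[OF assms, of w] period_pos[OF assms(1)]
      cyc_state_final_iff[OF assms(1), of "(r + length w) mod period q"]
      cycle_acc_mod[OF assms(1), of "r + length w"] by simp
  then show ?thesis unfolding chrobak_nfa_def lang_from_def by simp
qed

lemma wf_chrobak_nfa: "wf_nfa chrobak_nfa"
proof -
  have "finite cyclic" using finite_Q unfolding cyclic_def by simp
  moreover have "chrobak_trans s u \<subseteq> chrobak_states" if s: "s \<in> chrobak_states" for s u
  proof (cases "s < threshold")
    case True
    then show ?thesis unfolding chrobak_trans_def chrobak_states_def using period_pos by auto
  next
    case False
    then obtain q r where "q \<in> cyclic" "r < period q" "s = cyc_state q r"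
      using s False unfolding chrobak_states_def by auto
    then show ?thesis
      using chrobak_trans_cyc_state period_pos unfolding chrobak_states_def by auto
  qed
  ultimately show ?thesis
    unfolding wf_nfa_def chrobak_nfa_def chrobak_states_def chrobak_final_def threshold_def
    by auto
qed

lemma lang_chrobak_nfa: "nfa_lang chrobak_nfa = {w. length w \<in> acc}"
  using lang_from_tail[of 0] unfolding nfa_lang_def threshold_def by (simp add: chrobak_nfa_def)

lemma future_saturated_in_bool_alg:
  assumes "\<And>x y. future x = future y \<Longrightarrow> x \<in> X \<longleftrightarrow> y \<in> X"
  shows "{w :: unit list. length w \<in> X} \<in> bool_alg_gen (two_sided_derivs {w. length w \<in> acc})"
proof (rule bool_alg_gen_if_saturated)
  let ?L = "{w :: unit list. length w \<in> acc}"
  let ?H = "range (\<lambda>i. two_sided_deriv (replicate i ()) ?L [])"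
  have deriv: "two_sided_deriv (replicate i ()) ?L [] = {w. length w \<in> future i}" for i
    by (simp add: two_sided_deriv_def future_def)
  then have "?H \<subseteq> (\<lambda>S. {w. length w \<in> S}) ` range future" by auto
  then show "finite ?H" using finite_range_future finite_subset by blast
  show "?H \<subseteq> bool_alg_gen (two_sided_derivs ?L)"
    unfolding two_sided_derivs_def by (auto intro: bool_alg_gen.gen)
  fix a b :: "unit list"
  assume "\<forall>D\<in>?H. a \<in> D \<longleftrightarrow> b \<in> D"
  then have "i + length a \<in> acc \<longleftrightarrow> i + length b \<in> acc" for i
    using deriv by (auto simp: future_def)
  then have "length a + i \<in> acc \<longleftrightarrow> length b + i \<in> acc" for i by (metis add.commute)
  then have "future (length a) = future (length b)" unfolding future_def by blast
  then show "a \<in> {w. length w \<in> X} \<Longrightarrow> b \<in> {w. length w \<in> X}"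
    using assms[of "length a" "length b"] by simp
qed

lemma subatomic_chrobak_nfa: "subatomic {w. length w \<in> acc} chrobak_nfa"
  unfolding subatomic_def
proof
  fix s assume s: "s \<in> nfa_states chrobak_nfa"
  show "lang_from chrobak_nfa {s} \<in> bool_alg_gen (two_sided_derivs {w. length w \<in> acc})"
  proof (cases "s < threshold")
    case True
    have "{w :: unit list. length w \<in> future s} \<in> bool_alg_gen (two_sided_derivs {w. length w \<in> acc})"
      by (intro future_saturated_in_bool_alg) (metis mem_future_swap)
    then show ?thesis using lang_from_tail[OF True] by (simp add: future_def)
  next
    case False
    then obtain q r where qr: "q \<in> cyclic" "r < period q" "s = cyc_state q r"
      using s unfolding chrobak_states_def chrobak_nfa_def nfa_states_def by auto
    have "{w :: unit list. length w \<in> {x. x + r \<in> cycle_acc q}}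
        \<in> bool_alg_gen (two_sided_derivs {w. length w \<in> acc})"
    proof (rule future_saturated_in_bool_alg)
      fix x y
      assume "future x = future y"
      then have "future (x + r) = future (y + r)" by (rule future_add)
      then have "x + r \<in> cycle_acc q \<longleftrightarrow> y + r \<in> cycle_acc q" by (rule cycle_acc_future_cong)
      then show "x \<in> {x. x + r \<in> cycle_acc q} \<longleftrightarrow> y \<in> {x. x + r \<in> cycle_acc q}" by simp
    qed
    then show ?thesis using lang_from_cyc_state[OF qr(1,2)] qr(3) by (simp add: add.commute)
  qed
qed

lemma card_chrobak_states: "card (nfa_states chrobak_nfa) \<le> threshold + card Q * card Q"
proof -
  have fin: "finite cyclic" using finite_Q unfolding cyclic_def by simp
  have "card chrobak_states
      \<le> card {..<threshold} + card ((\<lambda>(q, r). cyc_state q r) ` (SIGMA q:cyclic. {..<period q}))"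
    unfolding chrobak_states_def by (rule card_Un_le)
  also have "card ((\<lambda>(q, r). cyc_state q r) ` (SIGMA q:cyclic. {..<period q}))
      \<le> card (SIGMA q:cyclic. {..<period q})"
    by (rule card_image_le) (use fin in auto)
  also have "card (SIGMA q:cyclic. {..<period q}) = (\<Sum>q\<in>cyclic. period q)"
    using fin by simp
  also have "\<dots> \<le> card cyclic * card Q"
    using sum_bounded_above[of cyclic period "card Q"] period_le_card by simp
  also have "card cyclic \<le> card Q"
    unfolding cyclic_def using finite_Q by (intro card_mono) auto
  finally show ?thesis unfolding chrobak_nfa_def nfa_states_def by simp
qed

lemma nsyn_acc_le: "nsyn {w :: unit list. length w \<in> acc} \<le> 4 * (card Q)\<^sup>2"
proof (cases "Q = {}")
  case True
  then have "acc = {}" using I_subset_Q unfolding acc_def by auto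
  then show ?thesis by (simp add: nsyn_empty)
next
  case False
  then have "1 \<le> card Q * card Q" using finite_Q by (simp add: Suc_le_eq card_gt_0_iff)
  have "nsyn {w :: unit list. length w \<in> acc} \<le> card (nfa_states chrobak_nfa)"
    by (rule nsyn_le_card[OF wf_chrobak_nfa lang_chrobak_nfa subatomic_chrobak_nfa])
  also have "\<dots> \<le> threshold + card Q * card Q" by (rule card_chrobak_states)
  also have "\<dots> \<le> 4 * (card Q)\<^sup>2"
    using \<open>1 \<le> card Q * card Q\<close> unfolding threshold_def by (simp add: power2_eq_square)
  finally show ?thesis .
qed

end

theorem corollary5p4:
  shows "\<exists>C::nat. \<forall>L :: unit list set. regular L \<longrightarrow> nsyn L \<le> C * (ns L)^2"
proof (intro exI[of _ 4] allI impI)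
  fix L :: "unit list set"
  assume "regular L"
  then obtain A where A: "wf_nfa A" "nfa_lang A = L" "card (nfa_states A) = ns L"
    by (rule ns_attained)
  obtain Q I F d where A_def: "A = (Q, I, F, d)" by (cases A)
  interpret unary_nfa Q I F d
    using A(1) unfolding A_def wf_nfa_def by unfold_locales auto
  have "L = {w. length w \<in> acc}"
    using A(2) lang_from_initial unfolding A_def nfa_lang_def by simp
  then show "nsyn L \<le> 4 * (ns L)^2"
    using nsyn_acc_le A(3) unfolding A_def nfa_states_def by simp
qed

end
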